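(* If $\mathfrak{h}$ is a finite-dimensional complex Lie algebra, then $\mathcal{R}^i_1(\mathcal{C}^\bullet\mathfrak{h})$ is finite for all $i$. In particular, the cdga $\mathcal{C}^\bullet\mathfrak{h}$ has trivial resonance in degree $i$ (i.e. $0$ is an isolated point of $\mathcal{R}^i_1(\mathcal{C}^\bullet\mathfrak{h})$) whenever $H^i(\mathfrak{h})\neq 0$.
   Context: $\mathcal{C}^\bullet\mathfrak{h}=(\bigwedge^\bullet\mathfrak{h}^*,d)$ is the Chevalley–Eilenberg cochain cdga of $\mathfrak{h}$, with cohomology $H^\bullet(\mathfrak{h})$ (Lie algebra cohomology with trivial coefficients $\mathbb{C}$). For $\omega\in H^1(\mathfrak{h})=\mathrm{Hom}(\mathfrak{h}/[\mathfrak{h},\mathfrak{h}],\mathbb{C})$, ${}_\omega\mathbb{C}$ denotes the one-dimensional $\mathfrak{h}$-module on which $x$ acts by $\omega(x)$; then $\mathcal{R}^i_r(\mathcal{C}^\bullet\mathfrak{h})=\{\omega\in H^1(\mathfrak{h}):\dim H^i(\mathfrak{h},{}_\omega\mathbb{C})\ge r\}$ (equivalently, the set of closed $\omega\in\mathfrak{h}^*$ for which the complex $(\bigwedge^\bullet\mathfrak{h}^*, d+\omega\wedge\cdot)$ has $i$-th cohomology of dimension $\ge r$). *)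

theory Defs
  imports "HOL-Analysis.Analysis" "HOL-Library.Function_Algebras"
begin

text \<open>A finite-dimensional complex Lie algebra h of dimension n is given by a basis
  e_0,...,e_(n-1) and structure constants: [e_a, e_b] = sum over m<n of c a b m e_m.\<close>

definition lie_structure :: "nat \<Rightarrow> (nat \<Rightarrow> nat \<Rightarrow> nat \<Rightarrow> complex) \<Rightarrow> bool" where
  "lie_structure n c \<longleftrightarrow>
     (\<forall>a<n. \<forall>m<n. c a a m = 0) \<and>
     (\<forall>a<n. \<forall>b<n. \<forall>m<n. c a b m = - c b a m) \<and>
     (\<forall>a<n. \<forall>b<n. \<forall>d<n. \<forall>p<n.
        (\<Sum>m<n. c a b m * c m d p + c b d m * c m a p + c d a m * c m b p) = 0)"

definition cscale :: "complex \<Rightarrow> ('a \<Rightarrow> complex) \<Rightarrow> ('a \<Rightarrow> complex)" where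
  "cscale a f = (\<lambda>x. a * f x)"

definition cdim :: "('a \<Rightarrow> complex) set \<Rightarrow> nat" where
  "cdim S = vector_space.dim cscale S"

definition remove_nth :: "nat \<Rightarrow> 'a list \<Rightarrow> 'a list" where
  "remove_nth j xs = take j xs @ drop (Suc j) xs"

text \<open>An i-cochain (element of the i-th exterior power of the dual of h) is an alternating
  i-linear form on h, represented by its values on tuples of basis vectors.\<close>
definition cochains :: "nat \<Rightarrow> nat \<Rightarrow> (nat list \<Rightarrow> complex) set" where
  "cochains n i = {f.
     (\<forall>xs. f xs \<noteq> 0 \<longrightarrow> length xs = i \<and> set xs \<subseteq> {..<n}) \<and>
     (\<forall>xs. \<not> distinct xs \<longrightarrow> f xs = 0) \<and>
     (\<forall>xs j k. j < k \<and> k < length xs \<longrightarrow> f (xs[j := xs ! k, k := xs ! j]) = - f xs)}"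

text \<open>Chevalley--Eilenberg differential with coefficients in the one-dimensional module
  on which x acts by omega(x), where omega(e_m) = om m; i.e. d + omega wedge.
  It maps i-cochains to (i+1)-cochains.\<close>
definition ce_diff :: "nat \<Rightarrow> (nat \<Rightarrow> nat \<Rightarrow> nat \<Rightarrow> complex) \<Rightarrow> (nat \<Rightarrow> complex) \<Rightarrow> nat
     \<Rightarrow> (nat list \<Rightarrow> complex) \<Rightarrow> (nat list \<Rightarrow> complex)" where
  "ce_diff n c om i f = (\<lambda>xs.
     if length xs = Suc i \<and> set xs \<subseteq> {..<n} then
       (\<Sum>j<Suc i. (-1) ^ j * om (xs ! j) * f (remove_nth j xs)) +
       (\<Sum>k<Suc i. \<Sum>j<k. (-1) ^ (j + k) *
          (\<Sum>m<n. c (xs ! j) (xs ! k) m * f (m # remove_nth j (remove_nth k xs))))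
     else 0)"

definition cohom_dim :: "nat \<Rightarrow> (nat \<Rightarrow> nat \<Rightarrow> nat \<Rightarrow> complex) \<Rightarrow> (nat \<Rightarrow> complex) \<Rightarrow> nat \<Rightarrow> nat" where
  "cohom_dim n c om i =
     cdim {f \<in> cochains n i. ce_diff n c om i f = 0} -
     (if i = 0 then 0 else cdim (ce_diff n c om (i - 1) ` cochains n (i - 1)))"

text \<open>H^1(h) = Hom(h/[h,h], C): linear functionals on h (given by their values on the basis,
  zero outside indices < n) vanishing on [h,h].\<close>
definition H1 :: "nat \<Rightarrow> (nat \<Rightarrow> nat \<Rightarrow> nat \<Rightarrow> complex) \<Rightarrow> (nat \<Rightarrow> complex) set" where
  "H1 n c = {om. (\<forall>m\<ge>n. om m = 0) \<and> (\<forall>a<n. \<forall>b<n. (\<Sum>m<n. c a b m * om m) = 0)}"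

definition resonance :: "nat \<Rightarrow> (nat \<Rightarrow> nat \<Rightarrow> nat \<Rightarrow> complex) \<Rightarrow> nat \<Rightarrow> nat \<Rightarrow> (nat \<Rightarrow> complex) set" where
  "resonance n c i r = {om \<in> H1 n c. cohom_dim n c om i \<ge> r}"

definition isolated_zero :: "nat \<Rightarrow> (nat \<Rightarrow> complex) set \<Rightarrow> bool" where
  "isolated_zero n R \<longleftrightarrow> (\<lambda>_. 0) \<in> R \<and>
     (\<exists>e>0. \<forall>om\<in>R. om \<noteq> (\<lambda>_. 0) \<longrightarrow> (\<exists>m<n. e \<le> cmod (om m)))"

end

theory Submission
  imports Defs
begin

text \<open>For a basis vector \<open>e\<^sub>a\<close>, Cartan's formula
  \<open>\<theta>\<^sub>a = \<iota>\<^sub>a d\<^sub>\<omega> + d\<^sub>\<omega> \<iota>\<^sub>a\<close> defines a linear endomorphism of the \<open>i\<close>-cochains that maps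
  cocycles to coboundaries; so if it is injective, \<open>H\<^sup>i(h, \<omega>\<complex>)\<close> vanishes. Since
  \<open>\<iota>\<^sub>a(\<omega> \<and> f) + \<omega> \<and> \<iota>\<^sub>a f = \<omega>(e\<^sub>a) f\<close>, twisting by \<open>\<omega>\<close> shifts \<open>\<theta>\<^sub>a\<close> by \<open>\<omega>(e\<^sub>a)\<close>.
  Hence for resonant \<open>\<omega>\<close> every \<open>-\<omega>(e\<^sub>a)\<close> is an eigenvalue of the untwisted \<open>\<theta>\<^sub>a\<close> on the
  finite-dimensional space of \<open>i\<close>-cochains, which leaves finitely many choices for \<open>\<omega>\<close>;
  and in a finite set every point is isolated.\<close>

section \<open>Linear algebra\<close>

context vector_space
begin

lemma independent_card_le_dim_finite_span:
  assumes "independent S" "S \<subseteq> T" "T \<subseteq> span D" "finite D"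
  shows "card S \<le> dim T"
proof -
  obtain B where B: "B \<subseteq> T" "independent B" "T \<subseteq> span B" "card B = dim T"
    by (rule basis_exists)
  have "finite B"
    using independent_span_bound[OF assms(4) B(2)] B(1) assms(3) by auto
  then show ?thesis
    using independent_span_bound[OF _ assms(1), of B] B assms(2) by auto
qed

lemma dim_le_dim_if_inj_on:
  assumes K: "Vector_Spaces.linear scale scale K" and "subspace Z" "inj_on K Z"
    and "K ` Z \<subseteq> T" "T \<subseteq> span D" "finite D"
  shows "dim Z \<le> dim T"
proof -
  interpret K: Vector_Spaces.linear scale scale K by (fact K)
  obtain B where B: "B \<subseteq> Z" "independent B" "Z \<subseteq> span B" "card B = dim Z"
    by (rule basis_exists)
  have inj_span: "inj_on K (span B)"
    using inj_on_subset[OF \<open>inj_on K Z\<close>] span_minimal[OF B(1) \<open>subspace Z\<close>] by blast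
  have "independent (K ` B)"
    using K.independent_injective_image[OF B(2) inj_span] .
  moreover have "card (K ` B) = card B"
    using card_image inj_on_subset[OF inj_span span_superset] by blast
  ultimately show ?thesis
    using independent_card_le_dim_finite_span[of "K ` B" T D] B(1,4) assms(4-6) by auto
qed

lemma eigenvector_inj_on:
  assumes "\<And>\<mu>. \<mu> \<in> E \<Longrightarrow> v \<mu> \<noteq> 0 \<and> K (v \<mu>) = scale \<mu> (v \<mu>)"
  shows "inj_on v E"
proof (rule inj_onI)
  fix \<mu> \<nu> assume "\<mu> \<in> E" "\<nu> \<in> E" "v \<mu> = v \<nu>"
  then have "scale \<mu> (v \<mu>) = scale \<nu> (v \<mu>)" and "v \<mu> \<noteq> 0"
    using assms by metis+
  then show "\<mu> = \<nu>" by simp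
qed

lemma eigenvector_combination_eq_0:
  assumes K: "Vector_Spaces.linear scale scale K" and "finite E"
    and eig: "\<And>\<mu>. \<mu> \<in> E \<Longrightarrow> v \<mu> \<noteq> 0 \<and> K (v \<mu>) = scale \<mu> (v \<mu>)"
    and "(\<Sum>\<mu>\<in>E. scale (u \<mu>) (v \<mu>)) = 0" and "\<mu> \<in> E"
  shows "u \<mu> = 0"
  using \<open>finite E\<close> eig assms(4,5)
proof (induction E arbitrary: u \<mu> rule: finite_induct)
  case empty
  then show ?case by simp
next
  case (insert \<kappa> E)
  interpret K: Vector_Spaces.linear scale scale K by (fact K)
  let ?S = "\<lambda>u. \<Sum>\<nu>\<in>E. scale (u \<nu>) (v \<nu>)"
  have sum: "scale (u \<kappa>) (v \<kappa>) + ?S u = 0"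
    using insert.prems(2) insert.hyps by simp
  have "?S (\<lambda>\<nu>. u \<nu> * (\<nu> - \<kappa>)) = K (scale (u \<kappa>) (v \<kappa>) + ?S u) - scale \<kappa> (scale (u \<kappa>) (v \<kappa>) + ?S u)"
    using insert.prems(1)
    by (simp add: K.sum K.scale K.add scale_sum_right sum_subtractf[symmetric] algebra_simps)
  also have "\<dots> = 0"
    by (simp add: sum)
  finally have "?S (\<lambda>\<nu>. u \<nu> * (\<nu> - \<kappa>)) = 0" .
  then have "\<forall>\<nu>\<in>E. u \<nu> = 0"
    using insert.IH[of "\<lambda>\<nu>. u \<nu> * (\<nu> - \<kappa>)"] insert.prems(1) insert.hyps(2) by fastforce
  moreover have "u \<kappa> = 0"
    using sum calculation insert.prems(1)[of \<kappa>] by simp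
  ultimately show ?case using insert.prems(3) by auto
qed

lemma independent_eigenvectors:
  assumes K: "Vector_Spaces.linear scale scale K" and "finite E"
    and eig: "\<And>\<mu>. \<mu> \<in> E \<Longrightarrow> v \<mu> \<noteq> 0 \<and> K (v \<mu>) = scale \<mu> (v \<mu>)"
  shows "independent (v ` E)"
proof (rule independent_if_scalars_zero)
  show "finite (v ` E)"
    using \<open>finite E\<close> by simp
next
  fix c x assume "(\<Sum>x\<in>v ` E. scale (c x) x) = 0" "x \<in> v ` E"
  then show "c x = 0"
    using eigenvector_combination_eq_0[OF K \<open>finite E\<close> eig, of "c \<circ> v"]
    by (auto simp: sum.reindex[OF eigenvector_inj_on[OF eig]])
qed

lemma finite_eigenvalues:
  assumes K: "Vector_Spaces.linear scale scale K" and "finite D"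
  shows "finite {\<mu>. \<exists>x\<in>span D. x \<noteq> 0 \<and> K x = scale \<mu> x}" (is "finite ?E")
proof -
  define v where "v \<mu> = (SOME x. x \<in> span D \<and> x \<noteq> 0 \<and> K x = scale \<mu> x)" for \<mu>
  have v: "v \<mu> \<in> span D \<and> v \<mu> \<noteq> 0 \<and> K (v \<mu>) = scale \<mu> (v \<mu>)" if "\<mu> \<in> ?E" for \<mu>
    using someI_ex[of "\<lambda>x. x \<in> span D \<and> x \<noteq> 0 \<and> K x = scale \<mu> x"] that
    unfolding v_def by blast
  have bound: "card F \<le> card D" if F: "F \<subseteq> ?E" "finite F" for F
  proof -
    have eig: "v \<mu> \<noteq> 0 \<and> K (v \<mu>) = scale \<mu> (v \<mu>)" if "\<mu> \<in> F" for \<mu>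
      using v[OF subsetD[OF F(1) that]] by simp
    have inj: "inj_on v F"
      using eigenvector_inj_on[OF eig] .
    have "independent (v ` F)"
      using independent_eigenvectors[OF K F(2) eig] .
    moreover have "v ` F \<subseteq> span D"
      using v F(1) by (auto simp: subset_iff)
    ultimately have "card (v ` F) \<le> card D"
      using independent_span_bound[OF \<open>finite D\<close>] by blast
    then show ?thesis
      using card_image[OF inj] by simp
  qed
  show ?thesis
  proof (rule ccontr)
    assume "infinite ?E"
    then obtain F where "F \<subseteq> ?E" "finite F" "card F = Suc (card D)"
      using infinite_arbitrarily_large by blast
    then show False
      using bound[of F] by simp
  qed
qed

end

section \<open>Cochains\<close>

interpretation cfun: vector_space "cscale :: complex \<Rightarrow> ('a \<Rightarrow> complex) \<Rightarrow> ('a \<Rightarrow> complex)"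
  by unfold_locales (auto simp: cscale_def fun_eq_iff algebra_simps)

lemma cscale_apply [simp]: "cscale a f x = a * f x"
  by (simp add: cscale_def)

lemma cfun_linearI:
  assumes "\<And>f g. T (f + g) = T f + T g" and "\<And>a f. T (cscale a f) = cscale a (T f)"
  shows "Vector_Spaces.linear cscale cscale T"
  using assms by (simp add: Vector_Spaces.linear_iff cfun.vector_space_axioms)

lemma sum_fun_apply: "(\<Sum>x\<in>A. f x) y = (\<Sum>x\<in>A. f x y)"
  by (induction A rule: infinite_finite_induct) simp_all

lemma finite_support_in_span:
  assumes "finite L" and "\<And>x. f x \<noteq> 0 \<Longrightarrow> x \<in> L"
  shows "f \<in> cfun.span ((\<lambda>x. indicator {x}) ` L)"
proof -
  have "(\<Sum>x\<in>L. f x * indicator {x} y) = f y" for y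
  proof -
    have "(\<Sum>x\<in>L. f x * indicator {x} y) = (\<Sum>x\<in>L. if x = y then f x else 0)"
      by (rule sum.cong) (auto simp: indicator_def)
    also have "\<dots> = f y"
      using assms(2)[of y] by (auto simp: sum.delta[OF assms(1)])
    finally show ?thesis .
  qed
  then have "f = (\<Sum>x\<in>L. cscale (f x) (indicator {x}))"
    by (simp add: fun_eq_iff sum_fun_apply)
  also have "\<dots> \<in> cfun.span ((\<lambda>x. indicator {x}) ` L)"
    by (intro cfun.span_sum cfun.span_scale cfun.span_base) auto
  finally show ?thesis .
qed

definition basis_tuples :: "nat \<Rightarrow> nat \<Rightarrow> nat list set" where
  "basis_tuples n i = {xs. set xs \<subseteq> {..<n} \<and> length xs = i}"

lemma finite_basis_tuples: "finite (basis_tuples n i)"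
  unfolding basis_tuples_def by (rule finite_lists_length_eq) simp

lemma cochains_subset_span:
  "cochains n i \<subseteq> cfun.span ((\<lambda>xs. indicator {xs}) ` basis_tuples n i)"
proof
  fix f assume "f \<in> cochains n i"
  then have "f xs \<noteq> 0 \<Longrightarrow> xs \<in> basis_tuples n i" for xs
    by (simp add: cochains_def basis_tuples_def)
  then show "f \<in> cfun.span ((\<lambda>xs. indicator {xs}) ` basis_tuples n i)"
    by (rule finite_support_in_span[OF finite_basis_tuples])
qed

lemma ce_diff_in_span:
  "ce_diff n c om i f \<in> cfun.span ((\<lambda>xs. indicator {xs}) ` basis_tuples n (Suc i))"
  by (rule finite_support_in_span[OF finite_basis_tuples]) (simp add: ce_diff_def basis_tuples_def split: if_splits)

lemma cochains_supportD:
  "f \<in> cochains n i \<Longrightarrow> f xs \<noteq> 0 \<Longrightarrow> length xs = i \<and> set xs \<subseteq> {..<n}"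
  by (simp add: cochains_def)

lemma cochains_swapD:
  "f \<in> cochains n i \<Longrightarrow> j < k \<Longrightarrow> k < length xs \<Longrightarrow> f (xs[j := xs ! k, k := xs ! j]) = - f xs"
  by (simp add: cochains_def)

lemma subspace_cochains: "cfun.subspace (cochains n i)"
proof -
  have "f + g \<in> cochains n i" if f: "f \<in> cochains n i" and g: "g \<in> cochains n i" for f g
  proof -
    have "\<forall>xs. (f + g) xs \<noteq> 0 \<longrightarrow> length xs = i \<and> set xs \<subseteq> {..<n}"
      using cochains_supportD[OF f] cochains_supportD[OF g] by (metis add.right_neutral plus_fun_apply)
    moreover have "\<forall>xs. \<not> distinct xs \<longrightarrow> (f + g) xs = 0"
      using f g by (simp add: cochains_def)
    moreover have "\<forall>xs j k. j < k \<and> k < length xs \<longrightarrow>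
        (f + g) (xs[j := xs ! k, k := xs ! j]) = - (f + g) xs"
      using f g by (simp add: cochains_def)
    ultimately show ?thesis
      unfolding cochains_def by (simp only: mem_Collect_eq)
  qed
  moreover have "cscale a f \<in> cochains n i" if "f \<in> cochains n i" for a f
    using that unfolding cochains_def by auto
  moreover have "0 \<in> cochains n i"
    unfolding cochains_def by simp
  ultimately show ?thesis
    unfolding cfun.subspace_def by blast
qed

lemma ce_diff_0 [simp]: "ce_diff n c om i 0 = 0"
  by (simp add: ce_diff_def fun_eq_iff)

lemma linear_ce_diff: "Vector_Spaces.linear cscale cscale (ce_diff n c om i)"
proof (rule cfun_linearI)
  show "ce_diff n c om i (f + g) = ce_diff n c om i f + ce_diff n c om i g" for f g
    unfolding ce_diff_def by (auto simp: fun_eq_iff algebra_simps sum.distrib)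
  show "ce_diff n c om i (cscale a f) = cscale a (ce_diff n c om i f)" for a f
    unfolding ce_diff_def by (auto simp: fun_eq_iff algebra_simps sum_distrib_left)
qed

lemma remove_nth_Cons_0 [simp]: "remove_nth 0 (a # xs) = xs"
  by (simp add: remove_nth_def)

lemma remove_nth_Cons_Suc [simp]: "remove_nth (Suc j) (a # xs) = a # remove_nth j xs"
  by (simp add: remove_nth_def)

definition contract :: "nat \<Rightarrow> (nat list \<Rightarrow> complex) \<Rightarrow> (nat list \<Rightarrow> complex)" where
  "contract a f = (\<lambda>xs. f (a # xs))"

lemma linear_contract: "Vector_Spaces.linear cscale cscale (contract a)"
  by (rule cfun_linearI) (simp_all add: contract_def fun_eq_iff)

lemma contract_cochains:
  assumes "f \<in> cochains n i"
  shows "contract a f \<in> cochains n (i - 1)"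
proof -
  have "\<forall>xs. f (a # xs) \<noteq> 0 \<longrightarrow> length xs = i - 1 \<and> set xs \<subseteq> {..<n}"
    using cochains_supportD[OF assms, of "a # _"] by fastforce
  moreover have "\<forall>xs. \<not> distinct xs \<longrightarrow> f (a # xs) = 0"
    using assms by (simp add: cochains_def)
  moreover have "f (a # xs[j := xs ! k, k := xs ! j]) = - f (a # xs)" if "j < k \<and> k < length xs" for xs j k
  proof -
    have "f ((a # xs)[Suc j := (a # xs) ! Suc k, Suc k := (a # xs) ! Suc j]) = - f (a # xs)"
      by (rule cochains_swapD[OF assms]) (use that in simp_all)
    then show ?thesis by simp
  qed
  ultimately show ?thesis
    unfolding cochains_def contract_def by simp
qed

lemma contract_cochains_0: "f \<in> cochains n 0 \<Longrightarrow> contract a f = 0"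
  using cochains_supportD[of f n 0 "a # _"] by (auto simp: contract_def fun_eq_iff)

definition wedge_one_form :: "nat \<Rightarrow> (nat \<Rightarrow> complex) \<Rightarrow> nat \<Rightarrow> (nat list \<Rightarrow> complex) \<Rightarrow> (nat list \<Rightarrow> complex)" where
  "wedge_one_form n om i f = (\<lambda>xs. if length xs = Suc i \<and> set xs \<subseteq> {..<n} then
       (\<Sum>j<Suc i. (-1) ^ j * om (xs ! j) * f (remove_nth j xs)) else 0)"

lemma ce_diff_eq_untwisted_plus_wedge:
  "ce_diff n c om i f = ce_diff n c (\<lambda>_. 0) i f + wedge_one_form n om i f"
  unfolding ce_diff_def wedge_one_form_def by (auto simp: fun_eq_iff)

lemma contract_wedge_one_form:
  assumes f: "f \<in> cochains n i" and "a < n"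
  shows "contract a (wedge_one_form n om i f) + wedge_one_form n om (i - 1) (contract a f)
    = cscale (om a) f"
proof (cases i)
  case 0
  have "contract a f = 0"
    using contract_cochains_0 f 0 by blast
  moreover have "contract a (wedge_one_form n om 0 f) = cscale (om a) f"
    using cochains_supportD[OF f] \<open>a < n\<close> 0
    by (auto simp: fun_eq_iff contract_def wedge_one_form_def)
  ultimately show ?thesis
    using 0 by (simp add: fun_eq_iff wedge_one_form_def)
next
  case (Suc k)
  show ?thesis
  proof (rule ext)
    fix xs
    show "(contract a (wedge_one_form n om i f) + wedge_one_form n om (i - 1) (contract a f)) xs
      = cscale (om a) f xs"
    proof (cases "length xs = Suc k \<and> set xs \<subseteq> {..<n}")
      case True
      have "contract a (wedge_one_form n om i f) xs
          = om a * f xs + (\<Sum>j<Suc k. (-1) ^ Suc j * om (xs ! j) * f (a # remove_nth j xs))"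
        using True \<open>a < n\<close> Suc
        by (simp add: contract_def wedge_one_form_def sum.lessThan_Suc_shift del: sum.lessThan_Suc)
      moreover have "wedge_one_form n om (i - 1) (contract a f) xs
          = (\<Sum>j<Suc k. (-1) ^ j * om (xs ! j) * f (a # remove_nth j xs))"
        using True Suc by (simp add: contract_def wedge_one_form_def)
      ultimately show ?thesis
        by (simp add: sum.distrib[symmetric])
    next
      case False
      then show ?thesis
        using cochains_supportD[OF f, of xs] Suc by (auto simp: contract_def wedge_one_form_def)
    qed
  qed
qed

section \<open>The Lie derivative\<close>

text \<open>At \<open>i = 0\<close> the truncated index
  \<open>i - 1 = 0\<close> is harmless: \<open>contract a\<close> kills \<open>0\<close>-cochains.\<close>

definition lie_derivative :: "nat \<Rightarrow> (nat \<Rightarrow> nat \<Rightarrow> nat \<Rightarrow> complex) \<Rightarrow> (nat \<Rightarrow> complex) \<Rightarrow> nat \<Rightarrow> nat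
     \<Rightarrow> (nat list \<Rightarrow> complex) \<Rightarrow> (nat list \<Rightarrow> complex)" where
  "lie_derivative n c om a i f = contract a (ce_diff n c om i f) + ce_diff n c om (i - 1) (contract a f)"

lemma linear_lie_derivative: "Vector_Spaces.linear cscale cscale (lie_derivative n c om a i)"
proof -
  interpret d: Vector_Spaces.linear cscale cscale "ce_diff n c om i"
    by (rule linear_ce_diff)
  interpret d': Vector_Spaces.linear cscale cscale "ce_diff n c om (i - 1)"
    by (rule linear_ce_diff)
  interpret contract: Vector_Spaces.linear cscale cscale "contract a"
    by (rule linear_contract)
  show ?thesis
    by (rule cfun_linearI)
      (simp_all add: lie_derivative_def d.add d.scale d'.add d'.scale contract.add contract.scale
        algebra_simps del: One_nat_def)
qed

lemma lie_derivative_twisted: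
  assumes "f \<in> cochains n i" and "a < n"
  shows "lie_derivative n c om a i f = lie_derivative n c (\<lambda>_. 0) a i f + cscale (om a) f"
proof -
  interpret contract: Vector_Spaces.linear cscale cscale "contract a"
    by (rule linear_contract)
  have "lie_derivative n c om a i f = lie_derivative n c (\<lambda>_. 0) a i f
      + (contract a (wedge_one_form n om i f) + wedge_one_form n om (i - 1) (contract a f))"
    unfolding lie_derivative_def
    by (subst (1 2) ce_diff_eq_untwisted_plus_wedge) (simp add: contract.add algebra_simps)
  then show ?thesis
    using contract_wedge_one_form[OF assms] by simp
qed

lemma cohom_dim_eq_0_if_inj_on_lie_derivative:
  assumes inj: "inj_on (lie_derivative n c om a i) (cochains n i)"
  shows "cohom_dim n c om i = 0"
proof -
  interpret d: Vector_Spaces.linear cscale cscale "ce_diff n c om i"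
    by (rule linear_ce_diff)
  define Z where "Z = {f \<in> cochains n i. ce_diff n c om i f = 0}"
  define B where "B = (if i = 0 then {0} else ce_diff n c om (i - 1) ` cochains n (i - 1))"
  have "Z \<subseteq> cochains n i"
    by (simp add: Z_def)
  moreover have "cfun.subspace Z"
    using cfun.subspace_inter[OF subspace_cochains d.subspace_kernel] by (simp add: Z_def Int_def)
  moreover have "lie_derivative n c om a i ` Z \<subseteq> B"
  proof
    fix g assume "g \<in> lie_derivative n c om a i ` Z"
    then obtain z where z: "z \<in> cochains n i" "ce_diff n c om i z = 0"
      and g: "g = ce_diff n c om (i - 1) (contract a z)"
      by (auto simp: Z_def lie_derivative_def contract_def zero_fun_def)
    show "g \<in> B"
      using contract_cochains[OF z(1)] contract_cochains_0[of z n] z(1)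
      by (cases "i = 0") (simp_all add: B_def g)
  qed
  moreover have "B \<subseteq> cfun.span ((\<lambda>xs. indicator {xs}) ` basis_tuples n i)"
    using ce_diff_in_span[of n c om "i - 1"] by (auto simp: B_def cfun.span_zero)
  ultimately have "cfun.dim Z \<le> cfun.dim B"
    using cfun.dim_le_dim_if_inj_on[OF linear_lie_derivative _ inj_on_subset[OF inj]]
      finite_imageI[OF finite_basis_tuples] by blast
  moreover have "cfun.dim {0 :: nat list \<Rightarrow> complex} = 0"
    using cfun.dim_le_card[of "{0}" "{}"] by (simp add: cfun.span_empty)
  ultimately show ?thesis
    by (simp add: cohom_dim_def cdim_def Z_def B_def split: if_splits)
qed

section \<open>Resonance\<close>

lemma lie_derivative_eigenvalue_if_resonant:
  assumes "om \<in> resonance n c i 1" and "a < n"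
  shows "\<exists>f\<in>cochains n i. f \<noteq> 0 \<and> lie_derivative n c (\<lambda>_. 0) a i f = cscale (- om a) f"
proof (rule ccontr)
  assume no_eigenvector: "\<not> ?thesis"
  interpret L: Vector_Spaces.linear cscale cscale "lie_derivative n c om a i"
    by (rule linear_lie_derivative)
  have "inj_on (lie_derivative n c om a i) (cochains n i)"
    unfolding L.inj_on_iff_eq_0[OF subspace_cochains]
  proof (intro ballI impI)
    fix f assume f: "f \<in> cochains n i" and "lie_derivative n c om a i f = 0"
    then have "lie_derivative n c (\<lambda>_. 0) a i f = cscale (- om a) f"
      using lie_derivative_twisted[OF f assms(2), of c om] by (simp add: fun_eq_iff add_eq_0_iff)
    then show "f = 0"
      using no_eigenvector f by blast
  qed
  then have "cohom_dim n c om i = 0"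
    by (rule cohom_dim_eq_0_if_inj_on_lie_derivative)
  then show False
    using assms(1) by (simp add: resonance_def)
qed

lemma finite_funs_zero_outside:
  assumes "finite A" and "\<And>a. a \<in> A \<Longrightarrow> finite (E a)"
  shows "finite {f. (\<forall>a. a \<notin> A \<longrightarrow> f a = 0) \<and> (\<forall>a\<in>A. f a \<in> E a)}"
proof (rule finite_subset)
  show "{f. (\<forall>a. a \<notin> A \<longrightarrow> f a = 0) \<and> (\<forall>a\<in>A. f a \<in> E a)}
      \<subseteq> (\<lambda>g a. if a \<in> A then g a else 0) ` PiE A E"
  proof
    fix f assume f: "f \<in> {f. (\<forall>a. a \<notin> A \<longrightarrow> f a = 0) \<and> (\<forall>a\<in>A. f a \<in> E a)}"
    then have "f = (\<lambda>a. if a \<in> A then restrict f A a else 0)"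
      by (auto simp: fun_eq_iff)
    moreover have "restrict f A \<in> PiE A E"
      using f by auto
    ultimately show "f \<in> (\<lambda>g a. if a \<in> A then g a else 0) ` PiE A E"
      by blast
  qed
qed (simp add: finite_PiE assms)

lemma finite_resonance: "finite (resonance n c i 1)"
proof -
  define E where "E a = uminus ` {\<mu>. \<exists>f\<in>cfun.span ((\<lambda>xs. indicator {xs}) ` basis_tuples n i).
      f \<noteq> 0 \<and> lie_derivative n c (\<lambda>_. 0) a i f = cscale \<mu> f}" for a
  have "finite (E a)" for a
    unfolding E_def
    by (intro finite_imageI cfun.finite_eigenvalues[OF linear_lie_derivative] finite_basis_tuples)
  moreover have "om \<in> {om. (\<forall>m. m \<notin> {..<n} \<longrightarrow> om m = 0) \<and> (\<forall>m\<in>{..<n}. om m \<in> E m)}"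
    if om: "om \<in> resonance n c i 1" for om
  proof -
    have "om m = 0" if "m \<notin> {..<n}" for m
      using om that by (simp add: resonance_def H1_def)
    moreover have "om m \<in> E m" if m: "m \<in> {..<n}" for m
    proof -
      obtain f where "f \<in> cochains n i" "f \<noteq> 0"
        "lie_derivative n c (\<lambda>_. 0) m i f = cscale (- om m) f"
        using lie_derivative_eigenvalue_if_resonant om m by blast
      then show ?thesis
        unfolding E_def using cochains_subset_span by (force intro: rev_image_eqI[of "- om m"])
    qed
    ultimately show ?thesis
      by blast
  qed
  ultimately show ?thesis
    using finite_funs_zero_outside[of "{..<n}" E] finite_subset[of "resonance n c i 1"] by blast
qed

lemma isolated_zero_if_finite:
  assumes "finite R" and "(\<lambda>_. 0) \<in> R" and "\<And>om m. om \<in> R \<Longrightarrow> n \<le> m \<Longrightarrow> om m = 0"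
  shows "isolated_zero n R"
proof -
  define M where "M = insert 1 {cmod (om m) | om m. om \<in> R \<and> m < n \<and> om m \<noteq> 0}"
  have "M \<subseteq> insert 1 ((\<lambda>(om, m). cmod (om m)) ` (R \<times> {..<n}))"
    unfolding M_def by auto
  then have "finite M"
    by (rule finite_subset) (simp add: assms(1))
  then have "Min M > 0"
    by (auto simp: M_def)
  moreover have "\<exists>m<n. Min M \<le> cmod (om m)" if om: "om \<in> R" "om \<noteq> (\<lambda>_. 0)" for om
  proof -
    obtain m where m: "om m \<noteq> 0"
      using om(2) by auto
    then have "m < n"
      using assms(3)[OF om(1)] not_le by blast
    then have "cmod (om m) \<in> M"
      using om(1) m unfolding M_def by blast
    then show ?thesis
      using \<open>m < n\<close> Min_le[OF \<open>finite M\<close>] by blast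
  qed
  ultimately show ?thesis
    using assms(2) unfolding isolated_zero_def by blast
qed

theorem proposition4p1:
  fixes n :: nat and c :: "nat \<Rightarrow> nat \<Rightarrow> nat \<Rightarrow> complex"
  assumes "lie_structure n c"
  shows "(\<forall>i. finite (resonance n c i 1)) \<and>
         (\<forall>i. cohom_dim n c (\<lambda>_. 0) i \<noteq> 0 \<longrightarrow> isolated_zero n (resonance n c i 1))"
proof (intro conjI allI impI finite_resonance)
  fix i assume "cohom_dim n c (\<lambda>_. 0) i \<noteq> 0"
  show "isolated_zero n (resonance n c i 1)"
  proof (rule isolated_zero_if_finite[OF finite_resonance])
    show "(\<lambda>_. 0) \<in> resonance n c i 1"
      using \<open>cohom_dim n c (\<lambda>_. 0) i \<noteq> 0\<close> by (simp add: resonance_def H1_def)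
  qed (simp add: resonance_def H1_def)
qed

end
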